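(* Let $N_r,N_t$ be positive integers and let $\mathbf{H}$ be a random $N_r\times N_t$ complex matrix. For every $\mathrm{snr}>0$, $$I^{\rm mmse}(\mathrm{snr},N_r,N_t)=N_t\,E_{\mathbf H}\big[I^{\rm opt}(\mathrm{snr},N_r,N_t,\mathbf H)\big]-\sum_{i=1}^{N_t}E_{\mathbf H_i}\Big[I^{\rm opt}\Big(\tfrac{N_t-1}{N_t}\mathrm{snr},N_r,N_t-1,\mathbf H_i\Big)\Big],$$ where $\mathbf H_i$ is $\mathbf H$ with its $i$th column removed.
   Context: The channel $\mathbf H$ is normalized so that $E[\mathrm{tr}(\mathbf H\mathbf H^\dagger)]=N_rN_t$. For a deterministic complex matrix $\mathbf G$ with $N_r$ rows and $N$ columns and $\mathrm{snr}>0$, $I^{\rm opt}(\mathrm{snr},N_r,N,\mathbf G)=\log_2\det\big(\mathbf I_{N_r}+\frac{\mathrm{snr}}{N}\mathbf G\mathbf G^\dagger\big)$. The MMSE output SINR of stream $i$ is $\gamma_i=1/\big[(\mathbf I_{N_t}+\frac{\mathrm{snr}}{N_t}\mathbf H^\dagger\mathbf H)^{-1}\big]_{i,i}-1$, where $[\cdot]_{i,i}$ is the $i$th diagonal entry, and the MMSE achievable sum rate is $I^{\rm mmse}(\mathrm{snr},N_r,N_t)=\sum_{i=1}^{N_t}E[\log_2(1+\gamma_i)]$. *)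

theory Defs
  imports "HOL-Probability.Probability" "Jordan_Normal_Form.Schur_Decomposition"
    "Jordan_Normal_Form.Gauss_Jordan_Elimination"
begin

(* log-det mutual information: log2 det(I_Nr + snr/N * G G^dagger); the determinant is
   real and positive for snr > 0, we take its real part *)
definition I_opt :: "real \<Rightarrow> nat \<Rightarrow> nat \<Rightarrow> complex mat \<Rightarrow> real" where
  "I_opt snr Nr N G =
     log 2 (Re (det (1\<^sub>m Nr + (complex_of_real (snr / real N)) \<cdot>\<^sub>m (G * mat_adjoint G))))"

definition mat_trace :: "complex mat \<Rightarrow> complex" where
  "mat_trace A = (\<Sum>i<dim_row A. A $$ (i, i))"

definition chan_mat :: "nat \<Rightarrow> nat \<Rightarrow> ('w \<Rightarrow> nat \<Rightarrow> nat \<Rightarrow> complex) \<Rightarrow> 'w \<Rightarrow> complex mat" where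
  "chan_mat Nr Nt H w = mat Nr Nt (\<lambda>(r, c). H w r c)"

definition delete_col :: "complex mat \<Rightarrow> nat \<Rightarrow> complex mat" where
  "delete_col G i = mat (dim_row G) (dim_col G - 1)
      (\<lambda>(r, c). G $$ (r, if c < i then c else Suc c))"

definition mmse_sinr :: "real \<Rightarrow> nat \<Rightarrow> complex mat \<Rightarrow> nat \<Rightarrow> real" where
  "mmse_sinr snr Nt G i =
     1 / Re ((the (mat_inverse (1\<^sub>m Nt + (complex_of_real (snr / real Nt)) \<cdot>\<^sub>m (mat_adjoint G * G)))) $$ (i, i)) - 1"

definition I_mmse :: "'w measure \<Rightarrow> ('w \<Rightarrow> nat \<Rightarrow> nat \<Rightarrow> complex) \<Rightarrow> real \<Rightarrow> nat \<Rightarrow> nat \<Rightarrow> real" where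
  "I_mmse M H snr Nr Nt =
     (\<Sum>i<Nt. integral\<^sup>L M (\<lambda>w. log 2 (1 + mmse_sinr snr Nt (chan_mat Nr Nt H w) i)))"

end

theory Submission
  imports Defs
begin

text \<open>With \<open>c = snr / N\<^sub>t\<close> and \<open>A = I + c H\<^sup>\<dagger>H\<close>, Cramer's rule gives
  \<open>1 + \<gamma>\<^sub>i = 1 / (A\<^sup>-\<^sup>1)\<^sub>i\<^sub>i = det A / det A\<^sub>i\<close>, where the principal minor \<open>A\<^sub>i\<close> (row and
  column \<open>i\<close> deleted) is \<open>I + c H\<^sub>i\<^sup>\<dagger>H\<^sub>i\<close>. Sylvester's identity \<open>det (I + XY) = det (I + YX)\<close>
  turns both determinants into the ones defining \<open>I\<^sup>o\<^sup>p\<^sup>t\<close>, the rescaled SNR of the second term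
  keeping the per-stream power \<open>c\<close>. Hence \<open>log\<^sub>2 (1 + \<gamma>\<^sub>i)\<close> is pointwise a difference of two
  capacities, and the theorem follows by integrating and summing over \<open>i\<close>. Integrability holds
  because the eigenvalues of \<open>I + c YY\<^sup>\<dagger>\<close> are real and \<open>\<ge> 1\<close>, so that
  \<open>0 \<le> ln det (I + c YY\<^sup>\<dagger>) \<le> c tr (YY\<^sup>\<dagger>)\<close>, and the trace is integrable by the power normalisation.\<close>

lemma mat_adjoint_altdef:
  "mat_adjoint (A :: complex mat) = mat (dim_col A) (dim_row A) (\<lambda>(i, j). cnj (A $$ (j, i)))"
  by (rule eq_matI) (auto simp: mat_adjoint_def mat_of_rows_def cols_def)

lemma dim_mat_adjoint [simp]:
  "dim_row (mat_adjoint (A :: complex mat)) = dim_col A"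
  "dim_col (mat_adjoint (A :: complex mat)) = dim_row A"
  by (simp_all add: mat_adjoint_altdef)

lemma mat_adjoint_carrier [intro]:
  "(A :: complex mat) \<in> carrier_mat m n \<Longrightarrow> mat_adjoint A \<in> carrier_mat n m"
  by (simp add: mat_adjoint_altdef)

lemma mat_adjoint_adjoint [simp]: "mat_adjoint (mat_adjoint (A :: complex mat)) = A"
  by (rule eq_matI) (auto simp: mat_adjoint_altdef)

lemma index_mult_mat_vec_sum:
  "(A :: complex mat) \<in> carrier_mat m k \<Longrightarrow> v \<in> carrier_vec k \<Longrightarrow> i < m \<Longrightarrow>
    (A *\<^sub>v v) $ i = (\<Sum>j<k. A $$ (i, j) * v $ j)"
  by (auto simp: scalar_prod_def lessThan_atLeast0 intro!: sum.cong)

lemma of_real_cmod_square: "(complex_of_real (cmod z))\<^sup>2 = z * cnj z"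
  by (metis complex_norm_square of_real_power)

lemma trace_mult_commute:
  fixes X Y :: "complex mat"
  assumes "X \<in> carrier_mat a b" "Y \<in> carrier_mat b a"
  shows "mat_trace (X * Y) = mat_trace (Y * X)"
proof -
  have "mat_trace (X * Y) = (\<Sum>i<a. \<Sum>j<b. X $$ (i, j) * Y $$ (j, i))"
    using assms by (auto simp: mat_trace_def scalar_prod_def lessThan_atLeast0 intro!: sum.cong)
  also have "\<dots> = (\<Sum>j<b. \<Sum>i<a. Y $$ (j, i) * X $$ (i, j))"
    by (subst sum.swap) (simp add: mult.commute)
  also have "\<dots> = mat_trace (Y * X)"
    using assms by (auto simp: mat_trace_def scalar_prod_def lessThan_atLeast0 intro!: sum.cong)
  finally show ?thesis .
qed

lemma trace_similar_mat:
  assumes "similar_mat A (T :: complex mat)"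
  shows "mat_trace A = mat_trace T"
proof -
  from similar_matD[OF assms] obtain n P Q where
    carrier: "{A, T, P, Q} \<subseteq> carrier_mat n n" and QP: "Q * P = 1\<^sub>m n" and A: "A = P * T * Q"
    by blast
  have "mat_trace A = mat_trace (Q * (P * T))"
    unfolding A using carrier by (intro trace_mult_commute[of _ n n]) auto
  also have "Q * (P * T) = T"
    using carrier QP by (metis assoc_mult_mat insert_subset left_mult_one_mat)
  finally show ?thesis .
qed

lemma det_one_plus_mult_commute:
  fixes X Y :: "complex mat"
  assumes X: "X \<in> carrier_mat m n" and Y: "Y \<in> carrier_mat n m"
  shows "det (1\<^sub>m m + X * Y) = det (1\<^sub>m n + Y * X)"
proof -
  define L where "L = four_block_mat (1\<^sub>m m) X (0\<^sub>m n m) (1\<^sub>m n)"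
  define R where "R = four_block_mat (1\<^sub>m m) (-X) Y (1\<^sub>m n)"
  have L: "L \<in> carrier_mat (m + n) (m + n)" and R: "R \<in> carrier_mat (m + n) (m + n)"
    unfolding L_def R_def using X Y by auto
  have XY: "X * Y \<in> carrier_mat m m" "Y * X \<in> carrier_mat n n" using X Y by auto
  have "L * R = four_block_mat (1\<^sub>m m * 1\<^sub>m m + X * Y) (1\<^sub>m m * (-X) + X * 1\<^sub>m n)
      (0\<^sub>m n m * 1\<^sub>m m + 1\<^sub>m n * Y) (0\<^sub>m n m * (-X) + 1\<^sub>m n * 1\<^sub>m n)"
    unfolding L_def R_def using X Y by (intro mult_four_block_mat) auto
  also have "\<dots> = four_block_mat (1\<^sub>m m + X * Y) (0\<^sub>m m n) Y (1\<^sub>m n)"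
    using X Y by auto
  finally have LR: "det (L * R) = det (1\<^sub>m m + X * Y)"
    by (simp add: det_four_block_mat_upper_right_zero[of _ m _ n] XY X Y)
  have "R * L = four_block_mat (1\<^sub>m m * 1\<^sub>m m + (-X) * 0\<^sub>m n m) (1\<^sub>m m * X + (-X) * 1\<^sub>m n)
      (Y * 1\<^sub>m m + 1\<^sub>m n * 0\<^sub>m n m) (Y * X + 1\<^sub>m n * 1\<^sub>m n)"
    unfolding L_def R_def using X Y by (intro mult_four_block_mat) auto
  also have "\<dots> = four_block_mat (1\<^sub>m m) (0\<^sub>m m n) Y (1\<^sub>m n + Y * X)"
    using X Y XY by (auto simp: comm_add_mat[of "Y * X" n n "1\<^sub>m n"] comm_add_mat[of X m n "-X"])
  finally have RL: "det (R * L) = det (1\<^sub>m n + Y * X)"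
    by (simp add: det_four_block_mat_upper_right_zero[of _ m _ n] XY X Y)
  have "det (L * R) = det (R * L)"
    using det_mult[OF L R] det_mult[OF R L] by (simp add: mult.commute)
  with LR RL show ?thesis by simp
qed

lemma mat_inverse_diag_eq_minor_div_det:
  fixes A :: "complex mat"
  assumes A: "A \<in> carrier_mat n n" and det: "det A \<noteq> 0" and i: "i < n"
  shows "the (mat_inverse A) $$ (i, i) = det (mat_delete A i i) / det A"
proof -
  define B where "B = inverse (det A) \<cdot>\<^sub>m adj_mat A"
  have B: "B \<in> carrier_mat n n" unfolding B_def using adj_mat(1)[OF A] by simp
  have inverse_smult: "inverse (det A) \<cdot>\<^sub>m (det A \<cdot>\<^sub>m 1\<^sub>m n) = 1\<^sub>m n"
    using det by (intro eq_matI) auto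
  have AB: "A * B = 1\<^sub>m n"
    unfolding B_def using adj_mat[OF A] A by (simp add: mult_smult_distrib inverse_smult)
  obtain C where C: "mat_inverse A = Some C"
    using mat_inverse(1)[OF A, where b = "()"] det_non_zero_imp_unit[OF A det, where b = "()"]
    by (cases "mat_inverse A") auto
  from mat_inverse(2)[OF A C] have CA: "C * A = 1\<^sub>m n" and C': "C \<in> carrier_mat n n" by auto
  have "C = C * (A * B)" using C' AB by simp
  also have "\<dots> = B" using C' A B CA by (simp add: assoc_mult_mat[symmetric])
  finally have "the (mat_inverse A) = B" using C by simp
  then show ?thesis
    using A i by (simp add: B_def adj_mat_def cofactor_def field_simps)
qed

lemma borel_measurable_cnj [measurable]:
  "f \<in> borel_measurable M \<Longrightarrow> (\<lambda>x. cnj (f x :: complex)) \<in> borel_measurable M"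
  by (rule borel_measurable_continuous_on[OF continuous_on_cnj[OF continuous_on_id]])

lemma borel_measurable_det:
  fixes F :: "'w \<Rightarrow> complex mat"
  assumes "\<And>w. F w \<in> carrier_mat n n"
    and "\<And>i j. i < n \<Longrightarrow> j < n \<Longrightarrow> (\<lambda>w. F w $$ (i, j)) \<in> borel_measurable M"
  shows "(\<lambda>w. det (F w)) \<in> borel_measurable M"
proof -
  have "(\<lambda>w. det (F w)) =
      (\<lambda>w. \<Sum>p\<in>{p. p permutes {0..<n}}. signof p * (\<Prod>i=0..<n. F w $$ (i, p i)))"
    using assms(1) unfolding det_def carrier_mat_def by auto
  also have "\<dots> \<in> borel_measurable M"
  proof (intro borel_measurable_sum borel_measurable_times borel_measurable_prod borel_measurable_const)
    fix p i assume "p \<in> {p. p permutes {0..<n}}" and i: "i \<in> {0..<n}"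
    then have "p i < n" using permutes_in_image[of p "{0..<n}" i] by auto
    with i show "(\<lambda>w. F w $$ (i, p i)) \<in> borel_measurable M" using assms(2) by auto
  qed
  finally show ?thesis .
qed

definition id_plus_gram :: "complex \<Rightarrow> complex mat \<Rightarrow> complex mat" where
  "id_plus_gram a Y = 1\<^sub>m (dim_row Y) + a \<cdot>\<^sub>m (Y * mat_adjoint Y)"

definition frobenius_sq :: "complex mat \<Rightarrow> real" where
  "frobenius_sq Y = (\<Sum>i<dim_row Y. \<Sum>k<dim_col Y. (cmod (Y $$ (i, k)))\<^sup>2)"

lemma dim_id_plus_gram [simp]:
  "dim_row (id_plus_gram a Y) = dim_row Y" "dim_col (id_plus_gram a Y) = dim_row Y"
  by (simp_all add: id_plus_gram_def)

lemma id_plus_gram_carrier: "Y \<in> carrier_mat m n \<Longrightarrow> id_plus_gram a Y \<in> carrier_mat m m"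
  by auto

lemma index_id_plus_gram:
  assumes "Y \<in> carrier_mat m n" "i < m" "j < m"
  shows "id_plus_gram a Y $$ (i, j) =
    (if i = j then 1 else 0) + a * (\<Sum>k<n. Y $$ (i, k) * cnj (Y $$ (j, k)))"
  using assms
  by (auto simp: id_plus_gram_def mat_adjoint_altdef scalar_prod_def lessThan_atLeast0 intro!: sum.cong)

lemma det_id_plus_gram_adjoint:
  assumes Y: "Y \<in> carrier_mat m n"
  shows "det (id_plus_gram a (mat_adjoint Y)) = det (id_plus_gram a Y)"
proof -
  have Y': "mat_adjoint Y \<in> carrier_mat n m" using Y by auto
  have "det (id_plus_gram a (mat_adjoint Y)) = det (1\<^sub>m n + mat_adjoint Y * (a \<cdot>\<^sub>m Y))"
    using Y Y' by (simp add: id_plus_gram_def mult_smult_distrib)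
  also have "\<dots> = det (1\<^sub>m m + (a \<cdot>\<^sub>m Y) * mat_adjoint Y)"
    using Y Y' by (intro det_one_plus_mult_commute[symmetric]) auto
  also have "\<dots> = det (id_plus_gram a Y)"
    using Y Y' by (simp add: id_plus_gram_def mult_smult_assoc_mat)
  finally show ?thesis .
qed

lemma dim_delete_col [simp]:
  "dim_row (delete_col G i) = dim_row G" "dim_col (delete_col G i) = dim_col G - 1"
  by (simp_all add: delete_col_def)

lemma delete_col_carrier: "G \<in> carrier_mat m n \<Longrightarrow> delete_col G i \<in> carrier_mat m (n - 1)"
  by auto

lemma index_delete_col [simp]:
  "r < dim_row G \<Longrightarrow> k < dim_col G - 1 \<Longrightarrow>
    delete_col G i $$ (r, k) = G $$ (r, if k < i then k else Suc k)"
  by (simp add: delete_col_def)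

lemma mat_delete_id_plus_gram_adjoint:
  assumes G: "G \<in> carrier_mat m n" and i: "i < n"
  shows "mat_delete (id_plus_gram a (mat_adjoint G)) i i
    = id_plus_gram a (mat_adjoint (delete_col G i))" (is "?L = ?R")
proof (rule eq_matI)
  have G': "mat_adjoint G \<in> carrier_mat n m" using G by auto
  have Gi': "mat_adjoint (delete_col G i) \<in> carrier_mat (n - 1) m"
    using delete_col_carrier[OF G] by auto
  show "dim_row ?L = dim_row ?R" "dim_col ?L = dim_col ?R"
    using G by auto
  fix p q assume "p < dim_row ?R" "q < dim_col ?R"
  then have pq: "p < n - 1" "q < n - 1" using G by auto
  let ?p = "if p < i then p else Suc p" and ?q = "if q < i then q else Suc q"
  have "?L $$ (p, q) = id_plus_gram a (mat_adjoint G) $$ (?p, ?q)"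
    using pq G by (auto simp: mat_delete_def)
  also have "\<dots> = (if ?p = ?q then 1 else 0) + a * (\<Sum>k<m. cnj (G $$ (k, ?p)) * G $$ (k, ?q))"
    using pq G by (subst index_id_plus_gram[OF G']) (auto simp: mat_adjoint_altdef)
  also have "\<dots> = ?R $$ (p, q)"
    using pq G by (subst index_id_plus_gram[OF Gi']) (auto simp: mat_adjoint_altdef intro!: sum.cong)
  finally show "?L $$ (p, q) = ?R $$ (p, q)" .
qed

lemma frobenius_sq_delete_col_le:
  assumes i: "i < dim_col G"
  shows "frobenius_sq (delete_col G i) \<le> frobenius_sq G"
proof -
  let ?n = "dim_col G" and ?skip = "\<lambda>k. if k < i then k else Suc k"
  have inj: "inj_on ?skip {..<?n - 1}" by (auto simp: inj_on_def split: if_splits)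
  have "(\<Sum>k<?n - 1. (cmod (G $$ (r, ?skip k)))\<^sup>2) \<le> (\<Sum>k<?n. (cmod (G $$ (r, k)))\<^sup>2)" for r
  proof -
    have "(\<Sum>k<?n - 1. (cmod (G $$ (r, ?skip k)))\<^sup>2) = (\<Sum>k\<in>?skip ` {..<?n - 1}. (cmod (G $$ (r, k)))\<^sup>2)"
      by (subst sum.reindex[OF inj]) (simp add: comp_def)
    also have "\<dots> \<le> (\<Sum>k<?n. (cmod (G $$ (r, k)))\<^sup>2)"
      using i by (intro sum_mono2) auto
    finally show ?thesis .
  qed
  then show ?thesis
    unfolding frobenius_sq_def by (auto simp: delete_col_def intro!: sum_mono)
qed

lemma trace_gram_eq_frobenius_sq:
  "Re (mat_trace (Y * mat_adjoint Y)) = frobenius_sq Y"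
proof -
  have "mat_trace (Y * mat_adjoint Y) = (\<Sum>i<dim_row Y. \<Sum>k<dim_col Y. Y $$ (i, k) * cnj (Y $$ (i, k)))"
    by (auto simp: mat_trace_def mat_adjoint_altdef scalar_prod_def lessThan_atLeast0 intro!: sum.cong)
  also have "\<dots> = complex_of_real (frobenius_sq Y)"
    by (simp add: frobenius_sq_def of_real_cmod_square)
  finally show ?thesis by simp
qed

lemma trace_id_plus_gram:
  assumes Y: "Y \<in> carrier_mat m n"
  shows "mat_trace (id_plus_gram (of_real c) Y) = of_real (real m + c * frobenius_sq Y)"
proof -
  have "mat_trace (id_plus_gram (of_real c) Y)
      = (\<Sum>i<m. 1 + c * (\<Sum>k<n. Y $$ (i, k) * cnj (Y $$ (i, k))))"
    unfolding mat_trace_def using Y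
    by (intro sum.cong) (auto simp: index_id_plus_gram[OF Y])
  then show ?thesis
    using Y by (simp add: frobenius_sq_def sum.distrib sum_distrib_left of_real_cmod_square)
qed

lemma quadratic_form_id_plus_gram:
  fixes c :: real
  assumes Y: "Y \<in> carrier_mat m n" and v: "v \<in> carrier_vec m"
  defines "w \<equiv> \<lambda>k. \<Sum>j<m. cnj (Y $$ (j, k)) * v $ j"
  shows "(\<Sum>i<m. cnj (v $ i) * (id_plus_gram (of_real c) Y *\<^sub>v v) $ i)
    = of_real ((\<Sum>i<m. (cmod (v $ i))\<^sup>2) + c * (\<Sum>k<n. (cmod (w k))\<^sup>2))"
proof -
  let ?A = "id_plus_gram (of_real c) Y"
  have Av: "(?A *\<^sub>v v) $ i = v $ i + c * (\<Sum>k<n. Y $$ (i, k) * w k)" if i: "i < m" for i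
  proof -
    have "(?A *\<^sub>v v) $ i = (\<Sum>j<m. ?A $$ (i, j) * v $ j)"
      using Y by (intro index_mult_mat_vec_sum[OF _ v i]) auto
    also have "\<dots>
        = (\<Sum>j<m. ((if i = j then 1 else 0) + c * (\<Sum>k<n. Y $$ (i, k) * cnj (Y $$ (j, k)))) * v $ j)"
      by (intro sum.cong) (simp_all add: index_id_plus_gram[OF Y i])
    also have "\<dots> = v $ i + c * (\<Sum>j<m. \<Sum>k<n. Y $$ (i, k) * (cnj (Y $$ (j, k)) * v $ j))"
      using i by (simp add: distrib_right sum.distrib sum_distrib_left sum_distrib_right mult.assoc
          if_distrib[of "\<lambda>x. x * _"] cong: if_cong)
    also have "\<dots> = v $ i + c * (\<Sum>k<n. Y $$ (i, k) * w k)"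
      by (subst sum.swap) (simp add: w_def sum_distrib_left)
    finally show ?thesis .
  qed
  have "(\<Sum>i<m. cnj (v $ i) * (?A *\<^sub>v v) $ i)
      = (\<Sum>i<m. cnj (v $ i) * (v $ i + c * (\<Sum>k<n. Y $$ (i, k) * w k)))"
    using Av by (intro sum.cong) auto
  also have "\<dots> = (\<Sum>i<m. v $ i * cnj (v $ i)) + c * (\<Sum>k<n. w k * cnj (w k))"
    by (simp add: w_def distrib_left sum.distrib sum_distrib_left sum_distrib_right
        mult.commute mult.left_commute sum.swap[of _ "{..<n}"])
  finally show ?thesis by (simp add: of_real_cmod_square)
qed

lemma eigenvalue_id_plus_gram:
  fixes c :: real
  assumes Y: "Y \<in> carrier_mat m n" and c: "c \<ge> 0"
    and e: "eigenvalue (id_plus_gram (of_real c) Y) e"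
  shows "\<exists>r \<ge> 1. e = of_real r"
proof -
  let ?A = "id_plus_gram (of_real c) Y"
  from e obtain v where v: "v \<in> carrier_vec m" "v \<noteq> 0\<^sub>v m" "?A *\<^sub>v v = e \<cdot>\<^sub>v v"
    unfolding eigenvalue_def eigenvector_def using Y by auto
  define w where "w k = (\<Sum>j<m. cnj (Y $$ (j, k)) * v $ j)" for k
  define V where "V = (\<Sum>i<m. (cmod (v $ i))\<^sup>2)"
  define W where "W = (\<Sum>k<n. (cmod (w k))\<^sup>2)"
  have "e * of_real V = (\<Sum>i<m. cnj (v $ i) * (?A *\<^sub>v v) $ i)"
    using v by (simp add: V_def sum_distrib_left of_real_cmod_square mult.commute mult.left_commute)
  also have "\<dots> = of_real (V + c * W)"
    unfolding V_def W_def w_def by (rule quadratic_form_id_plus_gram[OF Y v(1)])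
  finally have eV: "e * of_real V = of_real (V + c * W)" .
  obtain i where i: "i < m" "v $ i \<noteq> 0" using v(1,2) by (auto simp: vec_eq_iff)
  have "0 < (cmod (v $ i))\<^sup>2" using i by simp
  also have "\<dots> \<le> V" unfolding V_def using i by (intro member_le_sum) auto
  finally have "V > 0" .
  moreover have "W \<ge> 0" unfolding W_def by (simp add: sum_nonneg)
  ultimately have "e = of_real ((V + c * W) / V)" and "(V + c * W) / V \<ge> 1"
    using eV c by (simp_all add: field_simps)
  then show ?thesis by blast
qed

text \<open>Triangularising by Schur, the diagonal consists of eigenvalues, which are real and \<open>\<ge> 1\<close>;
  the bound then comes from \<open>ln r \<le> r - 1\<close> summed against the trace.\<close>
lemma det_id_plus_gram:
  fixes c :: real
  assumes Y: "Y \<in> carrier_mat m n" and c: "c \<ge> 0"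
  shows "\<exists>r. det (id_plus_gram (of_real c) Y) = of_real r \<and> 1 \<le> r \<and> ln r \<le> c * frobenius_sq Y"
proof -
  let ?A = "id_plus_gram (of_real c) Y"
  have A: "?A \<in> carrier_mat m m" using Y by auto
  obtain es where es: "char_poly ?A = (\<Prod>a \<leftarrow> es. [:- a, 1:])"
    using char_poly_factorized[OF A] by blast
  define T where "T = schur_upper_triangular ?A es"
  have T: "T \<in> carrier_mat m m" and ut: "upper_triangular T" and sim: "similar_mat ?A T"
    using schur_upper_triangular[OF A es] unfolding T_def by auto
  have "\<exists>r \<ge> 1. T $$ (i, i) = of_real r" if i: "i < m" for i
  proof (rule eigenvalue_id_plus_gram[OF Y c])
    have "T $$ (i, i) \<in> set (diag_mat T)" using i T by (auto simp: diag_mat_def)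
    then have "poly (char_poly ?A) (T $$ (i, i)) = 0"
      unfolding char_poly_similar[OF sim] char_poly_upper_triangular[OF T ut] poly_prod_list
      by (auto simp: prod_list_zero_iff)
    then show "eigenvalue ?A (T $$ (i, i))" using eigenvalue_root_char_poly[OF A] by simp
  qed
  then obtain r where r: "\<And>i. i < m \<Longrightarrow> 1 \<le> r i \<and> T $$ (i, i) = of_real (r i)" by metis
  have "det ?A = prod_list (diag_mat T)"
    using det_similar[OF sim] det_upper_triangular[OF ut T] by simp
  also have "\<dots> = (\<Prod>i<m. T $$ (i, i))" using T
    by (simp add: diag_mat_def lessThan_atLeast0 prod.distinct_set_conv_list[of "[0..<m]", simplified])
  also have "\<dots> = of_real (\<Prod>i<m. r i)" using r by simp
  finally have det: "det ?A = of_real (\<Prod>i<m. r i)" .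
  have "of_real (\<Sum>i<m. r i) = mat_trace T" using r T by (simp add: mat_trace_def)
  also have "\<dots> = of_real (real m + c * frobenius_sq Y)"
    using trace_similar_mat[OF sim] trace_id_plus_gram[OF Y] by simp
  finally have trace: "(\<Sum>i<m. r i) = real m + c * frobenius_sq Y"
    using of_real_eq_iff by blast
  have pos: "\<And>i. i < m \<Longrightarrow> r i > 0" using r by fastforce
  have "ln (\<Prod>i<m. r i) = (\<Sum>i<m. ln (r i))" using pos by (intro ln_prod) (auto, fastforce)
  also have "\<dots> \<le> (\<Sum>i<m. r i - 1)" using pos by (intro sum_mono ln_le_minus_one) auto
  also have "\<dots> = c * frobenius_sq Y" using trace by (simp add: sum_subtractf)
  finally have "ln (\<Prod>i<m. r i) \<le> c * frobenius_sq Y" .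
  moreover have "1 \<le> (\<Prod>i<m. r i)" using r by (intro prod_ge_1) auto
  ultimately show ?thesis using det by blast
qed

lemma I_opt_id_plus_gram:
  "G \<in> carrier_mat m n \<Longrightarrow> I_opt snr m N G = log 2 (Re (det (id_plus_gram (of_real (snr / real N)) G)))"
  by (simp add: I_opt_def id_plus_gram_def)

lemma I_opt_bounds:
  assumes Y: "Y \<in> carrier_mat m n" and snr: "snr \<ge> 0"
  shows "0 \<le> I_opt snr m N Y" "I_opt snr m N Y \<le> snr / real N / ln 2 * frobenius_sq Y"
proof -
  obtain r where r: "det (id_plus_gram (of_real (snr / real N)) Y) = of_real r" "1 \<le> r"
    "ln r \<le> snr / real N * frobenius_sq Y"
    using det_id_plus_gram[OF Y, of "snr / real N"] snr by auto
  have I: "I_opt snr m N Y = ln r / ln 2"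
    unfolding I_opt_id_plus_gram[OF Y] r(1) by (simp add: log_def)
  show "0 \<le> I_opt snr m N Y" unfolding I using r(2) by simp
  show "I_opt snr m N Y \<le> snr / real N / ln 2 * frobenius_sq Y"
    unfolding I using divide_right_mono[OF r(3), of "ln 2"] by simp
qed

text \<open>Both sides use the per-stream power \<open>snr / n\<close>; for \<open>n = 1\<close> the matrix has no columns left.\<close>
lemma I_opt_delete_col_rescaled:
  assumes G: "G \<in> carrier_mat m n" and n: "n > 0"
  shows "I_opt ((real n - 1) / real n * snr) m (n - 1) (delete_col G i) = I_opt snr m n (delete_col G i)"
proof (cases "n = 1")
  case True
  then have "delete_col G i * mat_adjoint (delete_col G i) = 0\<^sub>m m m"
    using G by (intro eq_matI) (auto simp: scalar_prod_def)
  then show ?thesis by (simp add: I_opt_def)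
next
  case False
  with n have "(real n - 1) / real n * snr / real (n - 1) = snr / real n"
    by (simp add: of_nat_diff field_simps)
  then show ?thesis by (simp add: I_opt_def)
qed

lemma log_one_plus_mmse_sinr:
  assumes G: "G \<in> carrier_mat m n" and i: "i < n" and snr: "snr \<ge> 0"
  shows "log 2 (1 + mmse_sinr snr n G i) = I_opt snr m n G - I_opt snr m n (delete_col G i)"
proof -
  define c where "c = snr / real n"
  have c: "c \<ge> 0" unfolding c_def using snr by simp
  have Gi: "delete_col G i \<in> carrier_mat m (n - 1)" using G by auto
  obtain r where r: "det (id_plus_gram (of_real c) G) = of_real r" "1 \<le> r"
    using det_id_plus_gram[OF G c] by blast
  obtain ri where ri: "det (id_plus_gram (of_real c) (delete_col G i)) = of_real ri" "1 \<le> ri"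
    using det_id_plus_gram[OF Gi c] by blast
  let ?A = "id_plus_gram (of_real c) (mat_adjoint G)"
  have A: "?A \<in> carrier_mat n n" using G by auto
  have "the (mat_inverse ?A) $$ (i, i) = det (mat_delete ?A i i) / det ?A"
    using r det_id_plus_gram_adjoint[OF G] by (intro mat_inverse_diag_eq_minor_div_det[OF A _ i]) auto
  also have "\<dots> = of_real ri / of_real r"
    unfolding mat_delete_id_plus_gram_adjoint[OF G i] det_id_plus_gram_adjoint[OF G]
      det_id_plus_gram_adjoint[OF Gi] r(1) ri(1) ..
  finally have "mmse_sinr snr n G i = r / ri - 1"
    using G unfolding mmse_sinr_def c_def id_plus_gram_def by simp
  then have "log 2 (1 + mmse_sinr snr n G i) = log 2 r - log 2 ri"
    using r(2) ri(2) by (simp add: log_divide)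
  then show ?thesis
    unfolding I_opt_id_plus_gram[OF G] I_opt_id_plus_gram[OF Gi] c_def[symmetric] r(1) ri(1) by simp
qed

lemma borel_measurable_I_opt:
  fixes G :: "'w \<Rightarrow> complex mat"
  assumes G: "\<And>w. G w \<in> carrier_mat m n"
    and entries: "\<And>i j. i < m \<Longrightarrow> j < n \<Longrightarrow> (\<lambda>w. G w $$ (i, j)) \<in> borel_measurable M"
  shows "(\<lambda>w. I_opt snr m N (G w)) \<in> borel_measurable M"
proof -
  have "(\<lambda>w. det (id_plus_gram a (G w))) \<in> borel_measurable M" for a
  proof (rule borel_measurable_det)
    fix i j assume ij: "i < m" "j < m"
    show "(\<lambda>w. id_plus_gram a (G w) $$ (i, j)) \<in> borel_measurable M"
      unfolding index_id_plus_gram[OF G ij] using entries ij by measurable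
  qed (rule id_plus_gram_carrier[OF G])
  then show ?thesis unfolding I_opt_id_plus_gram[OF G] by measurable
qed

lemma integrable_I_opt:
  fixes G :: "'w \<Rightarrow> complex mat"
  assumes G: "\<And>w. G w \<in> carrier_mat m n"
    and entries: "\<And>i j. i < m \<Longrightarrow> j < n \<Longrightarrow> (\<lambda>w. G w $$ (i, j)) \<in> borel_measurable M"
    and f: "integrable M f" "\<And>w. frobenius_sq (G w) \<le> f w"
    and snr: "snr \<ge> 0"
  shows "integrable M (\<lambda>w. I_opt snr m N (G w))"
proof (rule Bochner_Integration.integrable_bound)
  show "integrable M (\<lambda>w. snr / real N / ln 2 * f w)" using f(1) by simp
  show "(\<lambda>w. I_opt snr m N (G w)) \<in> borel_measurable M"
    by (rule borel_measurable_I_opt[OF G entries])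
  have "\<bar>I_opt snr m N (G w)\<bar> \<le> snr / real N / ln 2 * f w" for w
  proof -
    have "I_opt snr m N (G w) \<le> snr / real N / ln 2 * frobenius_sq (G w)"
      by (rule I_opt_bounds(2)[OF G snr])
    also have "\<dots> \<le> snr / real N / ln 2 * f w"
      using f(2) snr by (intro mult_left_mono) auto
    finally show ?thesis using I_opt_bounds(1)[OF G snr] by simp
  qed
  then show "AE w in M. norm (I_opt snr m N (G w)) \<le> norm (snr / real N / ln 2 * f w)"
    by (intro AE_I2) (metis abs_ge_self order_trans real_norm_def)
qed

theorem theorem1:
  fixes M :: "'w measure" and H :: "'w \<Rightarrow> nat \<Rightarrow> nat \<Rightarrow> complex"
    and Nr Nt :: nat and snr :: real
  assumes "prob_space M"
    and "Nr > 0" and "Nt > 0"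
    and "\<And>r c. r < Nr \<Longrightarrow> c < Nt \<Longrightarrow> (\<lambda>w. H w r c) \<in> borel_measurable M"
    and "integral\<^sup>L M (\<lambda>w. Re (mat_trace (chan_mat Nr Nt H w * mat_adjoint (chan_mat Nr Nt H w))))
           = real Nr * real Nt"
    and "snr > 0"
  shows "I_mmse M H snr Nr Nt =
           real Nt * integral\<^sup>L M (\<lambda>w. I_opt snr Nr Nt (chan_mat Nr Nt H w))
           - (\<Sum>i<Nt. integral\<^sup>L M (\<lambda>w. I_opt ((real Nt - 1) / real Nt * snr) Nr (Nt - 1)
                                            (delete_col (chan_mat Nr Nt H w) i)))"
proof -
  define G where "G = chan_mat Nr Nt H"
  have G: "G w \<in> carrier_mat Nr Nt" for w by (simp add: G_def chan_mat_def)
  have entries: "(\<lambda>w. G w $$ (r, k)) \<in> borel_measurable M" if "r < Nr" "k < Nt" for r k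
    using that assms(4) by (simp add: G_def chan_mat_def)
  have entries_del: "(\<lambda>w. delete_col (G w) i $$ (r, k)) \<in> borel_measurable M"
    if "r < Nr" "k < Nt - 1" for i r k
    using that entries[of r "if k < i then k else Suc k"] by (auto simp: G_def chan_mat_def)
  have "integral\<^sup>L M (\<lambda>w. frobenius_sq (G w)) \<noteq> 0"
    using assms(2,3,5) by (simp add: G_def trace_gram_eq_frobenius_sq)
  then have energy: "integrable M (\<lambda>w. frobenius_sq (G w))"
    using not_integrable_integral_eq by blast
  have int: "integrable M (\<lambda>w. I_opt snr Nr Nt (G w))"
    using assms(6) by (intro integrable_I_opt[OF G entries energy]) auto
  have int_del: "integrable M (\<lambda>w. I_opt snr Nr Nt (delete_col (G w) i))" if "i < Nt" for i
    using that assms(6)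
    by (intro integrable_I_opt[OF delete_col_carrier[OF G] entries_del energy] frobenius_sq_delete_col_le)
      (auto simp: G_def chan_mat_def)
  have "I_mmse M H snr Nr Nt =
      (\<Sum>i<Nt. integral\<^sup>L M (\<lambda>w. I_opt snr Nr Nt (G w) - I_opt snr Nr Nt (delete_col (G w) i)))"
    unfolding I_mmse_def G_def[symmetric] using assms(6)
    by (intro sum.cong Bochner_Integration.integral_cong log_one_plus_mmse_sinr[OF G]) auto
  also have "\<dots> = real Nt * integral\<^sup>L M (\<lambda>w. I_opt snr Nr Nt (G w))
      - (\<Sum>i<Nt. integral\<^sup>L M (\<lambda>w. I_opt snr Nr Nt (delete_col (G w) i)))"
    using int int_del by (simp add: Bochner_Integration.integral_diff sum_subtractf)
  also have "(\<lambda>i. integral\<^sup>L M (\<lambda>w. I_opt snr Nr Nt (delete_col (G w) i))) =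
      (\<lambda>i. integral\<^sup>L M (\<lambda>w. I_opt ((real Nt - 1) / real Nt * snr) Nr (Nt - 1) (delete_col (G w) i)))"
    using I_opt_delete_col_rescaled[OF G assms(3)] by simp
  finally show ?thesis unfolding G_def .
qed

end
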